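(* If $u_k,u\in\mathrm{Conv}_{\mathrm{coe}}(\mathbb{R}^n)$ are such that $\delta(u_k,u)\to 0$, then $u_k$ epi-converges to $u$ as $k\to\infty$. Furthermore, if $u_k,u\in\mathrm{Conv}_{\mathrm{sc}}(\mathbb{R}^n)$ and $u_k$ epi-converges to $u$, then $\delta(u_k,u)\to 0$ as $k\to\infty$.
   Context: $\mathrm{Conv}_{\mathrm{coe}}(\mathbb{R}^n)$ is the set of proper, lower semicontinuous, convex, coercive functions $u:\mathbb{R}^n\to\mathbb{R}\cup\{+\infty\}$; $\mathrm{Conv}_{\mathrm{sc}}(\mathbb{R}^n)$ is the subset of super-coercive ones ($\lim_{|x|\to\infty}u(x)/|x|=+\infty$). $u^*(y)=\sup_x(\langle x,y\rangle-u(x))$. $\delta(u,v)=\inf\{\lambda>0:\sup_{|x|\le1/\lambda}|u^*(x)-v^*(x)|\le\lambda\}$. Epi-convergence $u_k\to u$: for every $x$, $\liminf_k u_k(x_k)\ge u(x)$ for all $x_k\to x$ and $\limsup_k u_k(x_k)\le u(x)$ for some $x_k\to x$. *)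

theory Defs
  imports "HOL-Analysis.Analysis"
begin

text \<open>Functions u : R^n -> R \<union> {+\<infinity>} are modelled as maps into ereal that never take the value -\<infinity>.\<close>

definition proper_fun :: "('a \<Rightarrow> ereal) \<Rightarrow> bool" where
  "proper_fun u \<longleftrightarrow> (\<forall>x. u x \<noteq> -\<infinity>) \<and> (\<exists>x. u x \<noteq> \<infinity>)"

definition lsc_fun :: "('a::topological_space \<Rightarrow> ereal) \<Rightarrow> bool" where
  "lsc_fun u \<longleftrightarrow> (\<forall>t::ereal. closed {x. u x \<le> t})"

definition convex_efun :: "('a::real_vector \<Rightarrow> ereal) \<Rightarrow> bool" where
  "convex_efun u \<longleftrightarrow> (\<forall>x y. \<forall>t::real. 0 \<le> t \<and> t \<le> 1 \<longrightarrow>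
      u ((1 - t) *\<^sub>R x + t *\<^sub>R y) \<le> ereal (1 - t) * u x + ereal t * u y)"

definition coercive_fun :: "('a::real_normed_vector \<Rightarrow> ereal) \<Rightarrow> bool" where
  "coercive_fun u \<longleftrightarrow> (u \<longlongrightarrow> \<infinity>) at_infinity"

definition super_coercive_fun :: "('a::real_normed_vector \<Rightarrow> ereal) \<Rightarrow> bool" where
  "super_coercive_fun u \<longleftrightarrow> ((\<lambda>x. u x / ereal (norm x)) \<longlongrightarrow> \<infinity>) at_infinity"

definition Conv_coe :: "('a::euclidean_space \<Rightarrow> ereal) set" where
  "Conv_coe = {u. proper_fun u \<and> lsc_fun u \<and> convex_efun u \<and> coercive_fun u}"

definition Conv_sc :: "('a::euclidean_space \<Rightarrow> ereal) set" where
  "Conv_sc = {u. u \<in> Conv_coe \<and> super_coercive_fun u}"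

definition fconj :: "('a::euclidean_space \<Rightarrow> ereal) \<Rightarrow> 'a \<Rightarrow> ereal" where
  "fconj u y = (SUP x. ereal (inner x y) - u x)"

text \<open>Distance of two extended values, with the convention |(+\<infinity>) - (+\<infinity>)| = 0.\<close>
definition ediff :: "ereal \<Rightarrow> ereal \<Rightarrow> ereal" where
  "ediff a b = (if a = b then 0 else \<bar>a - b\<bar>)"

definition delta :: "('a::euclidean_space \<Rightarrow> ereal) \<Rightarrow> ('a \<Rightarrow> ereal) \<Rightarrow> ereal" where
  "delta u v = Inf {ereal l | l::real. l > 0 \<and>
      (SUP x\<in>cball 0 (1 / l). ediff (fconj u x) (fconj v x)) \<le> ereal l}"

definition epi_converges :: "(nat \<Rightarrow> 'a::topological_space \<Rightarrow> ereal) \<Rightarrow> ('a \<Rightarrow> ereal) \<Rightarrow> bool" where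
  "epi_converges uk u \<longleftrightarrow> (\<forall>x.
      (\<forall>xs. xs \<longlonglongrightarrow> x \<longrightarrow> liminf (\<lambda>k. uk k (xs k)) \<ge> u x) \<and>
      (\<exists>xs. xs \<longlonglongrightarrow> x \<and> limsup (\<lambda>k. uk k (xs k)) \<le> u x))"

end

theory Submission
  imports Defs
begin

text \<open>
  Convergence in delta means that the conjugates of the u_k converge to the conjugate of u uniformly
  on balls. For the liminf inequality, a separation argument in the epigraph gives, below every value
  m < u(x), an affine minorant of u exceeding m at x; by Fenchel-Young its slope w yields almost as
  good affine minorants of the u_k, because their conjugates at w converge. For the limsup
  inequality, if u_k stayed above u(x) + e near x, the same separation argument, combined with a
  lower bound on the u_k that is uniform in k, would give an affine minorant of u_k whose slope w is
  bounded independently of k and which exceeds u(x) + e at x; then the conjugate of u_k at w would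
  stay e below that of u.

  Conversely, the conjugate of a super-coercive u is finite and hence continuous. The liminf
  inequality of epi-convergence holds uniformly on compact sets, and convexity propagates linear
  growth from a large ball to the whole space; this bounds the conjugates of the u_k from above on
  balls. Recovery sequences bound them from below, uniformly on balls by compactness.
\<close>

section \<open>Affine minorants and the convex conjugate\<close>

definition affine_minorant :: "('a::real_inner \<Rightarrow> ereal) \<Rightarrow> 'a \<Rightarrow> real \<Rightarrow> bool" where
  "affine_minorant u w c \<longleftrightarrow> (\<forall>z. ereal (inner z w + c) \<le> u z)"

lemma affine_minorantD: "affine_minorant u w c \<Longrightarrow> ereal (inner z w + c) \<le> u z"
  by (simp add: affine_minorant_def)

lemma affine_minorant_zero_iff: "affine_minorant u 0 M \<longleftrightarrow> (\<forall>z. ereal M \<le> u z)"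
  by (simp add: affine_minorant_def)

lemma affine_minorant_convex_combination:
  assumes "affine_minorant u v c" "affine_minorant u v' c'" "0 \<le> t" "t \<le> 1"
  shows "affine_minorant u (t *\<^sub>R v + (1 - t) *\<^sub>R v') (t * c + (1 - t) * c')"
  unfolding affine_minorant_def
proof
  fix z
  show "ereal (inner z (t *\<^sub>R v + (1 - t) *\<^sub>R v') + (t * c + (1 - t) * c')) \<le> u z"
  proof (cases "u z")
    case (real s)
    have "inner z v + c \<le> s" "inner z v' + c' \<le> s"
      using affine_minorantD[OF assms(1), of z] affine_minorantD[OF assms(2), of z] real by auto
    then have "t * (inner z v + c) + (1 - t) * (inner z v' + c') \<le> t * s + (1 - t) * s"
      using assms(3,4) by (intro add_mono mult_left_mono) auto
    then show ?thesis using real by (simp add: inner_add_right algebra_simps)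
  next
    case MInf
    then show ?thesis using affine_minorantD[OF assms(1), of z] by simp
  qed simp
qed

lemma fconj_upper: "ereal (inner z w) - u z \<le> fconj u w"
  unfolding fconj_def by (rule SUP_upper) simp

lemma fenchel_young:
  assumes "fconj u w = ereal F"
  shows "affine_minorant u w (- F)"
  unfolding affine_minorant_def
proof
  fix z
  show "ereal (inner z w + - F) \<le> u z"
    using fconj_upper[of z w u] assms by (cases "u z") auto
qed

lemma fconj_le_if_affine_minorant:
  assumes "affine_minorant u w c"
  shows "fconj u w \<le> ereal (- c)"
  unfolding fconj_def
proof (rule SUP_least)
  fix z
  show "ereal (inner z w) - u z \<le> ereal (- c)"
    using affine_minorantD[OF assms, of z] by (cases "u z") auto
qed

lemma proper_funD:
  assumes "proper_fun u"
  shows "u z \<noteq> -\<infinity>" "\<exists>z a. u z = ereal a"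
proof -
  show "u z \<noteq> -\<infinity>" using assms unfolding proper_fun_def by auto
  obtain z where "u z \<noteq> \<infinity>" "u z \<noteq> -\<infinity>" using assms unfolding proper_fun_def by auto
  then show "\<exists>z a. u z = ereal a" by (cases "u z") auto
qed

lemma proper_fconj_neq_MInf:
  assumes "proper_fun u"
  shows "fconj u w \<noteq> -\<infinity>"
proof -
  obtain z a where "u z = ereal a" using proper_funD(2)[OF assms] by blast
  then show ?thesis using fconj_upper[of z w u] by auto
qed

section \<open>Affine minorants of lower semicontinuous convex functions\<close>

lemma convex_efunD:
  assumes "convex_efun u" "u a = ereal p" "u b = ereal q" "0 \<le> t" "t \<le> 1"
  shows "u ((1 - t) *\<^sub>R a + t *\<^sub>R b) \<le> ereal ((1 - t) * p + t * q)"
  using assms unfolding convex_efun_def by (metis plus_ereal.simps(1) times_ereal.simps(1))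

lemma convex_efun_epigraph:
  assumes cv: "convex_efun u" and nm: "\<And>z. u z \<noteq> -\<infinity>"
  shows "convex {p::'a::real_vector \<times> real. u (fst p) \<le> ereal (snd p)}"
proof (rule convexI)
  fix P Q :: "'a \<times> real" and a c :: real
  assume P: "P \<in> {p. u (fst p) \<le> ereal (snd p)}" and Q: "Q \<in> {p. u (fst p) \<le> ereal (snd p)}"
    and ac: "0 \<le> a" "0 \<le> c" "a + c = 1"
  obtain z1 s1 z2 s2 where PQ: "P = (z1, s1)" "Q = (z2, s2)" by fastforce
  have le: "u z1 \<le> ereal s1" "u z2 \<le> ereal s2" using P Q PQ by auto
  obtain p q where pq: "u z1 = ereal p" "u z2 = ereal q"
    using le nm by (cases "u z1"; cases "u z2") auto
  have "u ((1 - c) *\<^sub>R z1 + c *\<^sub>R z2) \<le> ereal ((1 - c) * p + c * q)"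
    using convex_efunD[OF cv pq] ac by simp
  also have "\<dots> \<le> ereal ((1 - c) * s1 + c * s2)"
    using ac le pq by (auto intro!: add_mono mult_left_mono)
  finally show "a *\<^sub>R P + c *\<^sub>R Q \<in> {p. u (fst p) \<le> ereal (snd p)}"
    using ac PQ by (simp add: eq_diff_eq[symmetric])
qed

lemma lsc_fun_greater_on_ball:
  assumes "lsc_fun u" "ereal m < u x"
  obtains r where "r > 0" "\<And>z. dist z x < r \<Longrightarrow> ereal m < u z"
proof -
  have "open (- {z. u z \<le> ereal m})"
    using assms(1) unfolding lsc_fun_def by (simp add: open_Compl)
  moreover have "x \<in> - {z. u z \<le> ereal m}" using assms(2) by auto
  ultimately obtain r where "r > 0" "ball x r \<subseteq> - {z. u z \<le> ereal m}" by (meson openE)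
  then show ?thesis using that by (auto simp: dist_commute not_le subset_iff)
qed

lemma epigraph_normal_nonneg:
  assumes epi: "\<And>z s. u z \<le> ereal s \<Longrightarrow> b \<le> inner y z + \<beta> * s" and p0: "u z0 = ereal p0"
  shows "0 \<le> \<beta>"
proof (rule ccontr)
  \<comment> \<open>The vertical ray above (z0, p0) lies in the epigraph,
    so it cannot run into the half-space.\<close>
  assume "\<not> 0 \<le> \<beta>"
  define t where "t = (\<bar>inner y z0 + \<beta> * p0\<bar> + \<bar>b\<bar> + 1) / (- \<beta>)"
  have t: "t \<ge> 0" "\<beta> * t = - (\<bar>inner y z0 + \<beta> * p0\<bar> + \<bar>b\<bar> + 1)"
    using \<open>\<not> 0 \<le> \<beta>\<close> unfolding t_def by (auto simp: divide_simps)
  have "u z0 \<le> ereal (p0 + t)" using p0 t(1) by simp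
  then have "b \<le> inner y z0 + \<beta> * (p0 + t)" by (rule epi)
  also have "\<dots> = inner y z0 + \<beta> * p0 + \<beta> * t" by (simp add: algebra_simps)
  finally show False using t(2) by linarith
qed

lemma convex_efun_separation:
  fixes u :: "'a::euclidean_space \<Rightarrow> ereal"
  assumes cv: "convex_efun u" and nm: "\<And>z. u z \<noteq> -\<infinity>" and dom: "u z0 \<noteq> \<infinity>"
    and r: "r > 0" and gt: "\<And>z. dist z x < r \<Longrightarrow> ereal m < u z"
  shows "\<exists>y \<beta> b. (y \<noteq> 0 \<or> \<beta> \<noteq> 0) \<and> 0 \<le> \<beta> \<and>
    (\<forall>z s. u z \<le> ereal s \<longrightarrow> b \<le> inner y z + \<beta> * s) \<and>
    inner y x + r / 2 * norm y + \<beta> * m \<le> b"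
proof -
  define S where "S = cball x (r/2) \<times> {..m}"
  define T where "T = {p::'a \<times> real. u (fst p) \<le> ereal (snd p)}"
  have cS: "convex S" unfolding S_def by (intro convex_Times convex_cball) auto
  have cT: "convex T" unfolding T_def by (rule convex_efun_epigraph[OF cv nm])
  have S0: "S \<noteq> {}" unfolding S_def using r by auto
  obtain p0 where p0: "u z0 = ereal p0" using dom nm by (cases "u z0") auto
  then have T0: "(z0, p0) \<in> T" unfolding T_def by simp
  have dis: "S \<inter> T = {}"
  proof (rule ccontr)
    assume "S \<inter> T \<noteq> {}"
    then obtain z s where "(z, s) \<in> S" "(z, s) \<in> T" by auto
    then have "dist z x < r" "s \<le> m" "u z \<le> ereal s"
      using r unfolding S_def T_def by (auto simp: dist_commute)
    with gt show False by (metis ereal_less_eq(3) leD order.trans)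
  qed
  obtain a b where a: "a \<noteq> 0" and aS: "\<forall>p\<in>S. inner a p \<le> b" and aT: "\<forall>p\<in>T. b \<le> inner a p"
    using separating_hyperplane_sets[OF cS cT S0 _ dis] T0 by blast
  obtain y \<beta> where a_eq: "a = (y, \<beta>)" by fastforce
  have epi: "b \<le> inner y z + \<beta> * s" if "u z \<le> ereal s" for z s
    using aT that a_eq unfolding T_def by auto
  define z1 where "z1 = (if y = 0 then x else x + (r / 2 / norm y) *\<^sub>R y)"
  have "(z1, m) \<in> S" unfolding S_def z1_def using r by (auto simp: dist_norm)
  moreover have "inner y z1 = inner y x + r / 2 * norm y"
    unfolding z1_def by (auto simp: inner_add_right power2_norm_eq_inner[symmetric] power2_eq_square)
  ultimately have sep: "inner y x + r / 2 * norm y + \<beta> * m \<le> b"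
    using aS a_eq by force
  have "0 \<le> \<beta>" using epi p0 by (rule epigraph_normal_nonneg)
  moreover have "y \<noteq> 0 \<or> \<beta> \<noteq> 0" using a a_eq by (auto simp: zero_prod_def)
  ultimately show ?thesis using epi sep by blast
qed

lemma convex_efun_affine_minorant_or_barrier:
  fixes u :: "'a::euclidean_space \<Rightarrow> ereal"
  assumes cv: "convex_efun u" and nm: "\<And>z. u z \<noteq> -\<infinity>" and dom: "u z0 \<noteq> \<infinity>"
    and r: "r > 0" and gt: "\<And>z. dist z x < r \<Longrightarrow> ereal m < u z"
  shows "(\<exists>v c. affine_minorant u v c \<and> r / 2 * norm v + m \<le> inner x v + c) \<or>
         (\<exists>y b. y \<noteq> 0 \<and> (\<forall>z. u z \<noteq> \<infinity> \<longrightarrow> b \<le> inner y z) \<and>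
           inner y x + r / 2 * norm y \<le> b)"
proof -
  obtain y \<beta> b where \<beta>: "y \<noteq> 0 \<or> \<beta> \<noteq> 0" "0 \<le> \<beta>"
    and epi: "\<forall>z s. u z \<le> ereal s \<longrightarrow> b \<le> inner y z + \<beta> * s"
    and sep: "inner y x + r / 2 * norm y + \<beta> * m \<le> b"
    using convex_efun_separation[OF cv nm dom r gt] by blast
  have finite: "b \<le> inner y z + \<beta> * s" if "u z = ereal s" for z s
    using that epi by simp
  show ?thesis
  proof (cases "\<beta> = 0")
    case True
    have "b \<le> inner y z" if "u z \<noteq> \<infinity>" for z
      using finite[of z] nm[of z] that True by (cases "u z") auto
    moreover have "y \<noteq> 0" "inner y x + r / 2 * norm y \<le> b" using \<beta> sep True by auto
    ultimately show ?thesis by blast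
  next
    case False
    then have "\<beta> > 0" using \<beta> by simp
    have "affine_minorant u (- (1 / \<beta>) *\<^sub>R y) (b / \<beta>)"
      unfolding affine_minorant_def
    proof
      fix z
      show "ereal (inner z (- (1 / \<beta>) *\<^sub>R y) + b / \<beta>) \<le> u z"
      proof (cases "u z")
        case (real s)
        have "b \<le> inner y z + \<beta> * s" using finite[OF real] .
        then have "(b - inner y z) / \<beta> \<le> s"
          using \<open>\<beta> > 0\<close> by (simp add: divide_le_eq mult.commute)
        then show ?thesis using real by (simp add: diff_divide_distrib inner_commute)
      qed (use nm in auto)
    qed
    moreover have "r / 2 * norm (- (1 / \<beta>) *\<^sub>R y) + m \<le> inner x (- (1 / \<beta>) *\<^sub>R y) + b / \<beta>"
    proof -
      have "(r / 2 * norm y + \<beta> * m) / \<beta> \<le> (b - inner y x) / \<beta>"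
        using sep \<open>\<beta> > 0\<close> by (intro divide_right_mono) auto
      then show ?thesis using \<open>\<beta> > 0\<close>
        by (simp add: add_divide_distrib diff_divide_distrib inner_commute)
    qed
    ultimately show ?thesis by blast
  qed
qed

lemma proper_lsc_convex_has_affine_minorant:
  fixes u :: "'a::euclidean_space \<Rightarrow> ereal"
  assumes cv: "convex_efun u" and pr: "proper_fun u" and ls: "lsc_fun u"
  obtains w c where "affine_minorant u w c"
proof -
  have nm: "\<And>z. u z \<noteq> -\<infinity>" using proper_funD(1)[OF pr] .
  obtain z0 p0 where p0: "u z0 = ereal p0" using proper_funD(2)[OF pr] by blast
  obtain r where r: "r > 0" "\<And>z. dist z z0 < r \<Longrightarrow> ereal (p0 - 1) < u z"
    using lsc_fun_greater_on_ball[OF ls, of "p0 - 1" z0] p0 by auto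
  have "\<nexists>y b. y \<noteq> 0 \<and> (\<forall>z. u z \<noteq> \<infinity> \<longrightarrow> b \<le> inner y z) \<and>
      inner y z0 + r / 2 * norm y \<le> b"
  proof
    assume "\<exists>y b. y \<noteq> 0 \<and> (\<forall>z. u z \<noteq> \<infinity> \<longrightarrow> b \<le> inner y z) \<and>
      inner y z0 + r / 2 * norm y \<le> b"
    then obtain y b where y: "y \<noteq> 0" "\<forall>z. u z \<noteq> \<infinity> \<longrightarrow> b \<le> inner y z"
      "inner y z0 + r / 2 * norm y \<le> b" by blast
    moreover have "b \<le> inner y z0" using y(2) p0 by simp
    moreover have "0 < r / 2 * norm y" using y(1) r(1) by simp
    ultimately show False by linarith
  qed
  moreover have "u z0 \<noteq> \<infinity>" using p0 by simp
  ultimately show ?thesis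
    using convex_efun_affine_minorant_or_barrier[OF cv nm _ r] that by blast
qed

lemma coercive_bounded_below_if_affine_minorant:
  fixes u :: "'a::euclidean_space \<Rightarrow> ereal"
  assumes co: "coercive_fun u" and mi: "affine_minorant u y c"
  obtains M where "\<And>z. ereal M \<le> u z"
proof -
  have "eventually (\<lambda>z. ereal 0 < u z) at_infinity"
    using co unfolding coercive_fun_def tendsto_PInfty by blast
  then obtain \<rho> where \<rho>: "\<And>z. \<rho> \<le> norm z \<Longrightarrow> ereal 0 < u z"
    unfolding eventually_at_infinity by blast
  have "ereal (min 0 (c - norm y * \<bar>\<rho>\<bar>)) \<le> u z" for z
  proof (cases "\<rho> \<le> norm z")
    case True
    then show ?thesis using \<rho> by (metis less_imp_le min.cobounded1 order.trans ereal_less_eq(3))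
  next
    case False
    have "- (norm z * norm y) \<le> inner z y"
      using Cauchy_Schwarz_ineq2[of z y] by (simp add: abs_le_iff)
    moreover have "norm z * norm y \<le> \<bar>\<rho>\<bar> * norm y"
      using False by (intro mult_right_mono) auto
    ultimately have "min 0 (c - norm y * \<bar>\<rho>\<bar>) \<le> inner z y + c"
      by (simp add: mult.commute)
    then have "ereal (min 0 (c - norm y * \<bar>\<rho>\<bar>)) \<le> ereal (inner z y + c)"
      by (simp only: ereal_less_eq(3))
    then show ?thesis using affine_minorantD[OF mi] order.trans by blast
  qed
  then show ?thesis using that by blast
qed

lemma Conv_coeD:
  assumes "u \<in> Conv_coe"
  shows "convex_efun u" "proper_fun u" "lsc_fun u" "coercive_fun u"
  using assms unfolding Conv_coe_def by auto

lemma Conv_coe_bounded_below: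
  assumes "u \<in> Conv_coe"
  obtains M where "\<And>z. ereal M \<le> u z"
  using proper_lsc_convex_has_affine_minorant[OF Conv_coeD(1-3)[OF assms]]
    coercive_bounded_below_if_affine_minorant[OF Conv_coeD(4)[OF assms]] by metis

lemma affine_minorant_bounded_slope_if_steep:
  assumes v: "affine_minorant u v c" "r / 2 * norm v + m \<le> inner x v + c"
    and M: "affine_minorant u 0 M" and r: "r > 0" and R: "R > 0" "m - M \<le> r / 2 * R"
  shows "\<exists>w c. norm w \<le> R \<and> affine_minorant u w c \<and> m \<le> inner x w + c"
proof (cases "norm v \<le> R")
  case True
  have "0 \<le> r / 2 * norm v" using r by simp
  then show ?thesis using True v by (intro exI[of _ v] exI[of _ c]) auto
next
  case False
  \<comment> \<open>Flatten the steep minorant by mixing it with the constant minorant M.\<close>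
  define \<theta> where "\<theta> = R / norm v"
  have "norm v > R" "norm v > 0" using False R by auto
  then have \<theta>: "0 < \<theta>" "\<theta> < 1" "\<theta> * norm v = R" unfolding \<theta>_def using R by (auto simp: field_simps)
  have "affine_minorant u (\<theta> *\<^sub>R v + (1 - \<theta>) *\<^sub>R 0) (\<theta> * c + (1 - \<theta>) * M)"
    using \<theta> by (intro affine_minorant_convex_combination v M) auto
  moreover have "norm (\<theta> *\<^sub>R v) \<le> R" using \<theta> by simp
  moreover have "m \<le> inner x (\<theta> *\<^sub>R v) + (\<theta> * c + (1 - \<theta>) * M)"
  proof -
    have "\<theta> * (r / 2 * norm v + m) \<le> \<theta> * (inner x v + c)"
      using v \<theta> by (intro mult_left_mono) auto
    moreover have "\<theta> * (r / 2 * norm v + m) = r / 2 * R + \<theta> * m"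
      unfolding \<theta>(3)[symmetric] by (simp add: algebra_simps)
    moreover have "(1 - \<theta>) * (m - M) \<le> r / 2 * R"
    proof (cases "m \<le> M")
      case True
      then have "(1 - \<theta>) * (m - M) \<le> 0" using \<theta> by (intro mult_nonneg_nonpos) auto
      also have "0 \<le> r / 2 * R" using r R by simp
      finally show ?thesis .
    next
      case False
      then have "(1 - \<theta>) * (m - M) \<le> m - M" using \<theta> by (intro mult_left_le_one_le) auto
      then show ?thesis using R(2) by linarith
    qed
    moreover have "(1 - \<theta>) * (m - M) = m - (\<theta> * m + (1 - \<theta>) * M)"
      by (simp add: algebra_simps)
    moreover have "inner x (\<theta> *\<^sub>R v) + (\<theta> * c + (1 - \<theta>) * M) = \<theta> * (inner x v + c) + (1 - \<theta>) * M"
      by (simp add: algebra_simps)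
    ultimately show ?thesis by linarith
  qed
  ultimately show ?thesis by (metis add_0_right scale_zero_right)
qed

lemma affine_minorant_bounded_slope_if_barrier:
  assumes y: "y \<noteq> 0" and barrier: "\<And>z. u z \<noteq> \<infinity> \<Longrightarrow> b \<le> inner y z"
    and sep: "inner y x + r / 2 * norm y \<le> b"
    and M: "affine_minorant u 0 M" and R: "R > 0" "m - M \<le> r / 2 * R"
  shows "\<exists>w c. norm w \<le> R \<and> affine_minorant u w c \<and> m \<le> inner x w + c"
proof -
  \<comment> \<open>u is infinite on the open half-space beyond the barrier,
    so every tilt of M along -y stays below u.\<close>
  define t where "t = R / norm y"
  have t: "t > 0" "t * norm y = R" unfolding t_def using R y by auto
  have "affine_minorant u (- t *\<^sub>R y) (M + t * b)"
    unfolding affine_minorant_def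
  proof
    fix z
    show "ereal (inner z (- t *\<^sub>R y) + (M + t * b)) \<le> u z"
    proof (cases "u z = \<infinity>")
      case False
      then have "t * b \<le> t * inner y z" using barrier t by (intro mult_left_mono) auto
      then have "ereal (inner z (- t *\<^sub>R y) + (M + t * b)) \<le> ereal M"
        by (simp add: inner_commute)
      also have "ereal M \<le> u z" using affine_minorantD[OF M, of z] by simp
      finally show ?thesis .
    qed simp
  qed
  moreover have "m \<le> inner x (- t *\<^sub>R y) + (M + t * b)"
  proof -
    have "t * (inner y x + r / 2 * norm y) \<le> t * b" using sep t by (intro mult_left_mono) auto
    then show ?thesis using R(2) t(2) by (simp add: algebra_simps inner_commute)
  qed
  moreover have "norm (- t *\<^sub>R y) \<le> R" using t by simp
  ultimately show ?thesis by blast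
qed

lemma bounded_slope_affine_minorant:
  fixes u :: "'a::euclidean_space \<Rightarrow> ereal"
  assumes cv: "convex_efun u" and M: "\<And>z. ereal M \<le> u z" and dom: "u z0 \<noteq> \<infinity>"
    and r: "r > 0" and gt: "\<And>z. dist z x < r \<Longrightarrow> ereal m < u z"
    and R: "R > 0" "m - M \<le> r / 2 * R"
  shows "\<exists>w c. norm w \<le> R \<and> affine_minorant u w c \<and> m \<le> inner x w + c"
proof -
  have nm: "u z \<noteq> -\<infinity>" for z using M[of z] by auto
  have M0: "affine_minorant u 0 M" using M by (simp add: affine_minorant_zero_iff)
  show ?thesis
    using convex_efun_affine_minorant_or_barrier[OF cv nm dom r gt]
      affine_minorant_bounded_slope_if_steep[OF _ _ M0 r R]
      affine_minorant_bounded_slope_if_barrier[OF _ _ _ M0 R] by blast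
qed

lemma Conv_coe_affine_minorant_above:
  fixes u :: "'a::euclidean_space \<Rightarrow> ereal"
  assumes u: "u \<in> Conv_coe" and m: "ereal m < u x"
  obtains w c where "affine_minorant u w c" "m \<le> inner x w + c"
proof -
  obtain r where r: "r > 0" "\<And>z. dist z x < r \<Longrightarrow> ereal m < u z"
    using lsc_fun_greater_on_ball[OF Conv_coeD(3)[OF u] m] by blast
  obtain M where M: "\<And>z. ereal M \<le> u z" using Conv_coe_bounded_below[OF u] by blast
  obtain z0 a0 where "u z0 = ereal a0" using proper_funD(2)[OF Conv_coeD(2)[OF u]] by blast
  then have z0: "u z0 \<noteq> \<infinity>" by simp
  define R where "R = max 1 (2 * (m - M) / r)"
  have "R > 0" "m - M \<le> r / 2 * R"
    unfolding R_def using r(1) by (auto simp: field_simps max_def)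
  then show ?thesis
    using bounded_slope_affine_minorant[OF Conv_coeD(1)[OF u] M z0 r] that by blast
qed

section \<open>Convergence in delta implies epi-convergence\<close>

lemma delta_nonneg: "0 \<le> delta u v"
  unfolding delta_def by (rule Inf_greatest) auto

lemma delta_less_imp_ediff_le:
  assumes "delta u v < ereal e" "norm w \<le> 1 / e"
  shows "ediff (fconj u w) (fconj v w) \<le> ereal e"
proof -
  obtain l where l: "l > 0" "(SUP x\<in>cball 0 (1 / l). ediff (fconj u x) (fconj v x)) \<le> ereal l" "l < e"
    using assms(1) unfolding delta_def Inf_less_iff by auto
  have "1 / e \<le> 1 / l" using l by (intro divide_left_mono) auto
  then have "w \<in> cball 0 (1 / l)" using assms(2) by simp
  then have "ediff (fconj u w) (fconj v w) \<le> (SUP x\<in>cball 0 (1 / l). ediff (fconj u x) (fconj v x))"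
    by (rule SUP_upper)
  also have "\<dots> \<le> ereal e" using l(2,3) by (meson ereal_less_eq(3) less_imp_le order.trans)
  finally show ?thesis .
qed

lemma delta_le_if_ediff_le:
  assumes "e > 0" "\<And>w. norm w \<le> 1 / e \<Longrightarrow> ediff (fconj u w) (fconj v w) \<le> ereal e"
  shows "delta u v \<le> ereal e"
  unfolding delta_def using assms by (intro Inf_lower) (auto intro!: SUP_least)

lemma delta_le_if_fconj_close:
  assumes e: "e > 0" and F: "\<And>w. fconj v w = ereal (F w)"
    and upper: "\<And>w. norm w \<le> 1 / e \<Longrightarrow> fconj u w \<le> ereal (F w + e)"
    and lower: "\<And>w. norm w \<le> 1 / e \<Longrightarrow> ereal (F w - e) \<le> fconj u w"
  shows "delta u v \<le> ereal e"
proof (rule delta_le_if_ediff_le[OF e])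
  fix w :: 'a assume w: "norm w \<le> 1 / e"
  then obtain x where "fconj u w = ereal x" "\<bar>x - F w\<bar> \<le> e"
    using upper[OF w] lower[OF w] by (cases "fconj u w") (auto simp: abs_le_iff)
  then show "ediff (fconj u w) (fconj v w) \<le> ereal e"
    using F e unfolding ediff_def by auto
qed

lemma delta_tendsto_zero_imp_uniform:
  assumes "(\<lambda>k. delta (uk k) u) \<longlonglongrightarrow> 0" "R > 0" "\<epsilon> > 0"
  shows "eventually (\<lambda>k. \<forall>w\<in>cball 0 R. ediff (fconj (uk k) w) (fconj u w) \<le> ereal \<epsilon>) sequentially"
proof -
  define e where "e = min \<epsilon> (1 / R)"
  have "e > 0" "R \<le> 1 / e" unfolding e_def using assms(2,3) by (auto simp: field_simps min_def)
  have "eventually (\<lambda>k. delta (uk k) u < ereal e) sequentially"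
    using order_tendstoD(2)[OF assms(1)] \<open>e > 0\<close> by simp
  then show ?thesis
  proof (rule eventually_mono)
    fix k assume "delta (uk k) u < ereal e"
    then have "ediff (fconj (uk k) w) (fconj u w) \<le> ereal e" if "norm w \<le> R" for w
      using delta_less_imp_ediff_le that \<open>R \<le> 1 / e\<close> by fastforce
    moreover have "ereal e \<le> ereal \<epsilon>" unfolding e_def by simp
    ultimately show "\<forall>w\<in>cball 0 R. ediff (fconj (uk k) w) (fconj u w) \<le> ereal \<epsilon>"
      by (meson mem_cball_0 order.trans)
  qed
qed

lemma ediff_le_ereal_imp_finite:
  assumes "ediff a (ereal b) \<le> ereal e"
  obtains a' where "a = ereal a'" "\<bar>a' - b\<bar> \<le> e"
  using assms that unfolding ediff_def by (cases a) (auto split: if_splits)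

lemma ediff_le_imp_gap_le:
  assumes "ediff a b \<le> ereal e" "a \<le> ereal A" "ereal B \<le> b" "a \<noteq> -\<infinity>"
  shows "B - A \<le> e"
  using assms unfolding ediff_def by (cases a; cases b) (auto split: if_splits)

lemma delta_liminf_ge_affine:
  assumes d: "(\<lambda>k. delta (uk k) u) \<longlonglongrightarrow> 0" and xs: "xs \<longlonglongrightarrow> x"
    and F: "fconj u w = ereal F"
  shows "ereal (inner x w - F) \<le> liminf (\<lambda>k. uk k (xs k))"
  unfolding le_Liminf_iff
proof (intro allI impI)
  fix y assume "y < ereal (inner x w - F)"
  then obtain y' where y': "y < ereal y'" "y' < inner x w - F"
    using ereal_dense2 by force
  define \<eta> where "\<eta> = (inner x w - F - y') / 2"
  have \<eta>: "\<eta> > 0" unfolding \<eta>_def using y' by simp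
  have "eventually (\<lambda>k. \<forall>w'\<in>cball 0 (norm w + 1). ediff (fconj (uk k) w') (fconj u w') \<le> ereal \<eta>) sequentially"
    by (rule delta_tendsto_zero_imp_uniform[OF d _ \<eta>]) (simp add: add_nonneg_pos)
  moreover have "eventually (\<lambda>k. inner x w - \<eta> < inner (xs k) w) sequentially"
    using order_tendstoD(1)[OF tendsto_inner[OF xs tendsto_const]] \<eta> by simp
  ultimately show "eventually (\<lambda>k. y < uk k (xs k)) sequentially"
  proof eventually_elim
    case (elim k)
    have "ediff (fconj (uk k) w) (ereal F) \<le> ereal \<eta>" using elim(1)[rule_format, of w] F by simp
    then obtain Fk where Fk: "fconj (uk k) w = ereal Fk" "\<bar>Fk - F\<bar> \<le> \<eta>"
      by (rule ediff_le_ereal_imp_finite)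
    have "Fk \<le> F + \<eta>" using Fk(2) by (simp add: abs_le_iff)
    moreover have "2 * \<eta> = inner x w - F - y'" unfolding \<eta>_def by simp
    ultimately have "y' < inner (xs k) w - Fk" using elim(2) by linarith
    with y'(1) have "y < ereal (inner (xs k) w - Fk)" by (simp add: order.strict_trans)
    also have "\<dots> \<le> uk k (xs k)" using affine_minorantD[OF fenchel_young[OF Fk(1)]] by simp
    finally show ?case .
  qed
qed

lemma delta_imp_epi_liminf:
  fixes uk :: "nat \<Rightarrow> 'a::euclidean_space \<Rightarrow> ereal"
  assumes u: "u \<in> Conv_coe" and d: "(\<lambda>k. delta (uk k) u) \<longlonglongrightarrow> 0" and xs: "xs \<longlonglongrightarrow> x"
  shows "u x \<le> liminf (\<lambda>k. uk k (xs k))"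
proof (rule dense_le)
  fix y assume "y < u x"
  show "y \<le> liminf (\<lambda>k. uk k (xs k))"
  proof (cases y)
    case (real m)
    obtain w c where wc: "affine_minorant u w c" "m \<le> inner x w + c"
      using Conv_coe_affine_minorant_above[OF u] \<open>y < u x\<close> real by blast
    obtain F where F: "fconj u w = ereal F" "F \<le> - c"
      using fconj_le_if_affine_minorant[OF wc(1)] proper_fconj_neq_MInf[OF Conv_coeD(2)[OF u]]
      by (cases "fconj u w") auto
    have "y \<le> ereal (inner x w - F)" using real wc(2) F(2) by simp
    also have "\<dots> \<le> liminf (\<lambda>k. uk k (xs k))" by (rule delta_liminf_ge_affine[OF d xs F(1)])
    finally show ?thesis .
  qed (use \<open>y < u x\<close> in auto)
qed

lemma delta_eventually_bounded_below:
  assumes d: "(\<lambda>k. delta (uk k) u) \<longlonglongrightarrow> 0" and F0: "fconj u 0 = ereal F0"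
  shows "eventually (\<lambda>k. \<forall>z. ereal (- F0 - 1) \<le> uk k z) sequentially"
proof -
  have "eventually (\<lambda>k. \<forall>w\<in>cball 0 1. ediff (fconj (uk k) w) (fconj u w) \<le> ereal 1) sequentially"
    by (rule delta_tendsto_zero_imp_uniform[OF d]) auto
  then show ?thesis
  proof (rule eventually_mono)
    fix k assume "\<forall>w\<in>cball 0 1. ediff (fconj (uk k) w) (fconj u w) \<le> ereal 1"
    then have "ediff (fconj (uk k) 0) (ereal F0) \<le> ereal 1" using F0 by (metis centre_in_cball zero_less_one less_imp_le)
    then obtain Fk where Fk: "fconj (uk k) 0 = ereal Fk" "\<bar>Fk - F0\<bar> \<le> 1"
      by (rule ediff_le_ereal_imp_finite)
    have "ereal (- F0 - 1) \<le> ereal (- Fk)" using Fk(2) by (simp add: abs_le_iff)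
    also have "ereal (- Fk) \<le> uk k z" for z
      using affine_minorantD[OF fenchel_young[OF Fk(1)], of z] by simp
    finally show "\<forall>z. ereal (- F0 - 1) \<le> uk k z" by blast
  qed
qed

lemma delta_eventually_near_points:
  fixes uk :: "nat \<Rightarrow> 'a::euclidean_space \<Rightarrow> ereal"
  assumes uk: "\<And>k. uk k \<in> Conv_coe" and u: "u \<in> Conv_coe"
    and d: "(\<lambda>k. delta (uk k) u) \<longlonglongrightarrow> 0" and a: "u x = ereal a" and e: "e > 0"
  shows "eventually (\<lambda>k. \<exists>z. dist z x < e \<and> uk k z \<le> ereal (a + e)) sequentially"
proof -
  obtain M where "\<And>z. ereal M \<le> u z" using Conv_coe_bounded_below[OF u] by blast
  then obtain F0 where F0: "fconj u 0 = ereal F0"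
    using fconj_le_if_affine_minorant[of u 0 M] proper_fconj_neq_MInf[OF Conv_coeD(2)[OF u]]
    by (cases "fconj u 0") (auto simp: affine_minorant_zero_iff)
  define m where "m = a + e"
  define M' where "M' = - F0 - 1"
  define R where "R = max 1 (2 * (m - M') / e)"
  have R: "R > 0" "m - M' \<le> e / 2 * R"
    unfolding R_def using e by (auto simp: field_simps max_def)
  have "eventually (\<lambda>k. \<forall>w\<in>cball 0 R. ediff (fconj (uk k) w) (fconj u w) \<le> ereal (e / 2)) sequentially"
    by (rule delta_tendsto_zero_imp_uniform[OF d R(1)]) (use e in simp)
  with delta_eventually_bounded_below[OF d F0]
  show ?thesis
  proof eventually_elim
    case (elim k)
    show ?case
    proof (rule ccontr)
      assume "\<nexists>z. dist z x < e \<and> uk k z \<le> ereal (a + e)"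
      then have gt: "\<And>z. dist z x < e \<Longrightarrow> ereal m < uk k z" unfolding m_def by (auto simp: not_le)
      obtain z0 a0 where "uk k z0 = ereal a0" using proper_funD(2)[OF Conv_coeD(2)[OF uk]] by blast
      then have z0: "uk k z0 \<noteq> \<infinity>" by simp
      obtain w c where wc: "norm w \<le> R" "affine_minorant (uk k) w c" "m \<le> inner x w + c"
        using bounded_slope_affine_minorant[OF Conv_coeD(1)[OF uk] _ z0 e gt R] elim(1)
        unfolding M'_def by blast
      have "inner x w - a - (- c) \<le> e / 2"
      proof (rule ediff_le_imp_gap_le)
        show "ediff (fconj (uk k) w) (fconj u w) \<le> ereal (e / 2)" using elim(2) wc(1) by simp
        show "fconj (uk k) w \<le> ereal (- c)" by (rule fconj_le_if_affine_minorant[OF wc(2)])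
        show "ereal (inner x w - a) \<le> fconj u w" using fconj_upper[of x w u] a by simp
        show "fconj (uk k) w \<noteq> -\<infinity>" by (rule proper_fconj_neq_MInf[OF Conv_coeD(2)[OF uk]])
      qed
      then show False using wc(3) e unfolding m_def by linarith
    qed
  qed
qed

lemma limsup_le_if_eventually_close:
  fixes f :: "nat \<Rightarrow> 'a::metric_space \<Rightarrow> ereal"
  assumes close: "\<And>\<delta>. \<delta> > 0 \<Longrightarrow>
    eventually (\<lambda>k. dist (xs k) x < \<delta> \<and> f k (xs k) \<le> ereal (a + \<delta>)) sequentially"
  shows "xs \<longlonglongrightarrow> x" "limsup (\<lambda>k. f k (xs k)) \<le> ereal a"
proof -
  show "xs \<longlonglongrightarrow> x"
  proof (rule tendstoI)
    fix \<delta> :: real assume "\<delta> > 0"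
    from close[OF this] show "eventually (\<lambda>k. dist (xs k) x < \<delta>) sequentially"
      by (rule eventually_mono) simp
  qed
  show "limsup (\<lambda>k. f k (xs k)) \<le> ereal a"
    unfolding Limsup_le_iff
  proof (intro allI impI)
    fix y assume "ereal a < y"
    then obtain t where t: "a < t" "ereal t < y" using ereal_dense2 by force
    show "eventually (\<lambda>k. f k (xs k) < y) sequentially"
      using close[of "t - a"] t by (auto elim!: eventually_mono intro: le_less_trans)
  qed
qed

lemma recovery_sequence_if_eventually_near:
  fixes f :: "nat \<Rightarrow> 'a::metric_space \<Rightarrow> ereal"
  assumes near: "\<And>\<delta>. \<delta> > 0 \<Longrightarrow>
    eventually (\<lambda>k. \<exists>z. dist z x < \<delta> \<and> f k z \<le> ereal (a + \<delta>)) sequentially"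
  shows "\<exists>xs. xs \<longlonglongrightarrow> x \<and> limsup (\<lambda>k. f k (xs k)) \<le> ereal a"
proof -
  \<comment> \<open>E k is the set of tolerances achievable at index k;
    pick points almost realising its infimum.\<close>
  define E where "E k = {\<delta>. \<delta> > 0 \<and> (\<exists>z. dist z x < \<delta> \<and> f k z \<le> ereal (a + \<delta>))}" for k
  have bdd: "bdd_below (E k)" for k unfolding E_def by (rule bdd_belowI[of _ 0]) auto
  have "\<exists>d z. E k \<noteq> {} \<longrightarrow> dist z x < d \<and> f k z \<le> ereal (a + d) \<and> d < Inf (E k) + 1 / Suc k" for k
  proof (cases "E k = {}")
    case False
    then obtain d where "d \<in> E k" "d < Inf (E k) + 1 / Suc k"
      using cInf_less_iff[OF False bdd] by (metis less_add_same_cancel1 of_nat_0_less_iff zero_less_Suc zero_less_divide_1_iff)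
    then show ?thesis unfolding E_def by blast
  qed simp
  then obtain D Z where DZ: "\<And>k. E k \<noteq> {} \<Longrightarrow>
      dist (Z k) x < D k \<and> f k (Z k) \<le> ereal (a + D k) \<and> D k < Inf (E k) + 1 / Suc k"
    by metis
  define xs where "xs k = (if E k \<noteq> {} then Z k else x)" for k
  have "eventually (\<lambda>k. dist (xs k) x < \<delta> \<and> f k (xs k) \<le> ereal (a + \<delta>)) sequentially"
    if "\<delta> > 0" for \<delta>
  proof -
    have "eventually (\<lambda>k. \<delta> / 2 \<in> E k) sequentially"
      using near[of "\<delta> / 2"] that by (auto simp: E_def elim!: eventually_mono)
    moreover have "eventually (\<lambda>k. 1 / real (Suc k) < \<delta> / 2) sequentially"
      using order_tendstoD(2)[OF LIMSEQ_inverse_real_of_nat, of "\<delta> / 2"] that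
      by (simp add: inverse_eq_divide)
    ultimately show ?thesis
    proof eventually_elim
      case (elim k)
      then have ne: "E k \<noteq> {}" by auto
      have "Inf (E k) \<le> \<delta> / 2" using cInf_lower[OF elim(1) bdd] .
      then have "D k < \<delta>" using DZ[OF ne] elim(2) by linarith
      then show ?case using DZ[OF ne] ne unfolding xs_def
        by (auto intro: order.trans[of _ "ereal (a + D k)"])
    qed
  qed
  then show ?thesis using limsup_le_if_eventually_close by blast
qed

lemma delta_imp_epi_limsup:
  fixes uk :: "nat \<Rightarrow> 'a::euclidean_space \<Rightarrow> ereal"
  assumes uk: "\<And>k. uk k \<in> Conv_coe" and u: "u \<in> Conv_coe" and d: "(\<lambda>k. delta (uk k) u) \<longlonglongrightarrow> 0"
  shows "\<exists>xs. xs \<longlonglongrightarrow> x \<and> limsup (\<lambda>k. uk k (xs k)) \<le> u x"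
proof (cases "u x")
  case (real a)
  then show ?thesis
    using recovery_sequence_if_eventually_near[OF delta_eventually_near_points[OF uk u d real]] by simp
next
  case PInf
  then show ?thesis by (intro exI[of _ "\<lambda>_. x"]) auto
next
  case MInf
  then show ?thesis using proper_funD(1)[OF Conv_coeD(2)[OF u]] by simp
qed

lemma delta_imp_epi_converges:
  fixes uk :: "nat \<Rightarrow> 'a::euclidean_space \<Rightarrow> ereal"
  assumes "\<And>k. uk k \<in> Conv_coe" "u \<in> Conv_coe" "(\<lambda>k. delta (uk k) u) \<longlonglongrightarrow> 0"
  shows "epi_converges uk u"
  unfolding epi_converges_def
  using delta_imp_epi_liminf[OF assms(2,3)] delta_imp_epi_limsup[OF assms] by blast

section \<open>Epi-convergence of super-coercive functions implies convergence in delta\<close>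

lemma Conv_sc_linear_minorant:
  fixes u :: "'a::euclidean_space \<Rightarrow> ereal"
  assumes u: "u \<in> Conv_sc"
  shows "\<exists>C. \<forall>z. ereal (K * norm z - C) \<le> u z"
proof -
  have uc: "u \<in> Conv_coe" and sc: "super_coercive_fun u" using u unfolding Conv_sc_def by auto
  obtain M where M: "\<And>z. ereal M \<le> u z" using Conv_coe_bounded_below[OF uc] by blast
  have "eventually (\<lambda>z. ereal \<bar>K\<bar> < u z / ereal (norm z)) at_infinity"
    using sc unfolding super_coercive_fun_def tendsto_PInfty by blast
  then obtain \<rho> where \<rho>: "\<And>z. \<rho> \<le> norm z \<Longrightarrow> ereal \<bar>K\<bar> < u z / ereal (norm z)"
    unfolding eventually_at_infinity by blast
  define \<rho>' where "\<rho>' = max \<rho> 1"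
  define C where "C = \<bar>K\<bar> * \<rho>' + \<bar>M\<bar>"
  have "ereal (K * norm z - C) \<le> u z" for z
  proof (cases "\<rho>' \<le> norm z")
    case True
    then have "norm z > 0" "ereal \<bar>K\<bar> < u z / ereal (norm z)" using \<rho> unfolding \<rho>'_def by auto
    moreover have "K * norm z - C \<le> \<bar>K\<bar> * norm z"
    proof -
      have "K * norm z \<le> \<bar>K\<bar> * norm z" by (intro mult_right_mono) auto
      moreover have "C \<ge> 0" unfolding C_def \<rho>'_def by auto
      ultimately show ?thesis by linarith
    qed
    ultimately show ?thesis
      using proper_funD(1)[OF Conv_coeD(2)[OF uc], of z]
      by (cases "u z") (auto simp: field_simps)
  next
    case False
    have "K * norm z \<le> \<bar>K\<bar> * \<rho>'"
      using False abs_ge_self[of K] by (intro order.trans[OF mult_right_mono mult_left_mono]) auto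
    then have "K * norm z - C \<le> M" unfolding C_def by linarith
    then show ?thesis using M[of z] order.trans ereal_less_eq(3) by blast
  qed
  then show ?thesis by blast
qed

lemma Conv_sc_fconj_finite:
  fixes u :: "'a::euclidean_space \<Rightarrow> ereal"
  assumes u: "u \<in> Conv_sc"
  obtains F where "fconj u w = ereal F"
proof -
  obtain C where C: "\<And>z. ereal (norm w * norm z - C) \<le> u z"
    using Conv_sc_linear_minorant[OF u, of "norm w"] by blast
  have "affine_minorant u w (- C)"
    unfolding affine_minorant_def
  proof
    fix z
    have "inner z w \<le> norm w * norm z" using Cauchy_Schwarz_ineq2[of z w] by (simp add: mult.commute)
    then have "ereal (inner z w + - C) \<le> ereal (norm w * norm z - C)" by simp
    then show "ereal (inner z w + - C) \<le> u z" using C order.trans by blast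
  qed
  moreover have "fconj u w \<noteq> -\<infinity>"
    using u unfolding Conv_sc_def by (simp add: proper_fconj_neq_MInf Conv_coeD(2))
  ultimately show ?thesis using that fconj_le_if_affine_minorant by (cases "fconj u w") force+
qed

lemma fconj_convex_on:
  assumes F: "\<And>w. fconj u w = ereal (F w)"
  shows "convex_on UNIV F"
proof (rule convex_onI)
  fix t :: real and a b :: 'a
  assume t: "0 < t" "t < 1"
  have "affine_minorant u ((1 - t) *\<^sub>R a + t *\<^sub>R b) ((1 - t) * - F a + t * - F b)"
    using affine_minorant_convex_combination[OF fenchel_young[OF F[of b]] fenchel_young[OF F[of a]], of t] t
    by (simp add: algebra_simps)
  from fconj_le_if_affine_minorant[OF this]
  show "F ((1 - t) *\<^sub>R a + t *\<^sub>R b) \<le> (1 - t) * F a + t * F b" using F by simp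
qed simp

lemma fconj_continuous_on:
  fixes F :: "'a::euclidean_space \<Rightarrow> real"
  assumes "\<And>w. fconj u w = ereal (F w)"
  shows "continuous_on UNIV F"
  by (rule convex_on_continuous[OF open_UNIV fconj_convex_on[OF assms]])

lemma LIMSEQ_extend_subseq:
  fixes g :: "nat \<Rightarrow> 'b::metric_space"
  assumes \<sigma>: "strict_mono \<sigma>" and g: "g \<longlonglongrightarrow> l"
  obtains xs where "xs \<longlonglongrightarrow> l" "\<And>j. xs (\<sigma> j) = g j"
proof
  define xs where "xs k = (if k \<in> range \<sigma> then g (inv \<sigma> k) else l)" for k
  have inj: "inj \<sigma>" using \<sigma> by (rule strict_mono_imp_inj_on)
  show "xs (\<sigma> j) = g j" for j unfolding xs_def using inv_f_f[OF inj] by simp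
  show "xs \<longlonglongrightarrow> l"
  proof (rule tendstoI)
    fix e :: real assume "e > 0"
    then obtain N where N: "\<And>j. j \<ge> N \<Longrightarrow> dist (g j) l < e"
      using tendstoD[OF g] unfolding eventually_sequentially by blast
    have "dist (xs k) l < e" if "\<sigma> N \<le> k" for k
    proof (cases "k \<in> range \<sigma>")
      case True
      then obtain j where j: "k = \<sigma> j" by blast
      then have "N \<le> j" using that strict_mono_less_eq[OF \<sigma>] by simp
      then show ?thesis using N j inv_f_f[OF inj] unfolding xs_def by simp
    qed (use \<open>e > 0\<close> xs_def in simp)
    then show "eventually (\<lambda>k. dist (xs k) l < e) sequentially"
      unfolding eventually_sequentially by blast
  qed
qed

lemma epi_liminf_subseq:
  fixes uk :: "nat \<Rightarrow> 'a::metric_space \<Rightarrow> ereal"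
  assumes li: "\<And>x xs. xs \<longlonglongrightarrow> x \<Longrightarrow> u x \<le> liminf (\<lambda>k. uk k (xs k))"
    and \<sigma>: "strict_mono \<sigma>" and ys: "ys \<longlonglongrightarrow> x"
  shows "u x \<le> liminf (\<lambda>j. uk (\<sigma> j) (ys j))"
proof -
  obtain xs where xs: "xs \<longlonglongrightarrow> x" "\<And>j. xs (\<sigma> j) = ys j"
    using LIMSEQ_extend_subseq[OF \<sigma> ys] by blast
  have "u x \<le> liminf (\<lambda>k. uk k (xs k))" by (rule li[OF xs(1)])
  also have "\<dots> \<le> liminf ((\<lambda>k. uk k (xs k)) \<circ> \<sigma>)" by (rule liminf_subseq_mono[OF \<sigma>])
  finally show ?thesis by (simp add: o_def xs(2))
qed

lemma epi_liminf_uniform_on_compact: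
  fixes uk :: "nat \<Rightarrow> 'a::metric_space \<Rightarrow> ereal" and \<Psi> :: "'b::metric_space \<Rightarrow> real"
  assumes li: "\<And>x xs. xs \<longlonglongrightarrow> x \<Longrightarrow> u x \<le> liminf (\<lambda>k. uk k (xs k))"
    and P: "compact P" and \<Psi>: "continuous_on P \<Psi>" and \<pi>: "continuous_on P \<pi>"
    and le: "\<And>p. p \<in> P \<Longrightarrow> ereal (\<Psi> p) \<le> u (\<pi> p)" and e: "\<epsilon> > 0"
  shows "eventually (\<lambda>k. \<forall>p\<in>P. ereal (\<Psi> p - \<epsilon>) \<le> uk k (\<pi> p)) sequentially"
proof (rule ccontr)
  assume "\<not> ?thesis"
  then obtain r :: "nat \<Rightarrow> nat" where r: "strict_mono r"
    "\<forall>n. \<not> (\<forall>p\<in>P. ereal (\<Psi> p - \<epsilon>) \<le> uk (r n) (\<pi> p))"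
    using not_eventually_sequentiallyD by blast
  then have "\<forall>n. \<exists>p. p \<in> P \<and> uk (r n) (\<pi> p) < ereal (\<Psi> p - \<epsilon>)" by (meson not_le)
  then obtain pp where pp: "\<And>n. pp n \<in> P" "\<And>n. uk (r n) (\<pi> (pp n)) < ereal (\<Psi> (pp n) - \<epsilon>)"
    by metis
  obtain l s where l: "l \<in> P" "strict_mono s" "(pp \<circ> s) \<longlonglongrightarrow> l"
    using seq_compactE[OF compact_imp_seq_compact[OF P], of pp] pp(1) by blast
  define \<sigma> where "\<sigma> = r \<circ> s"
  have \<sigma>: "strict_mono \<sigma>" unfolding \<sigma>_def using r(1) l(2) by (rule strict_mono_o)
  have ys: "(\<lambda>j. \<pi> (pp (s j))) \<longlonglongrightarrow> \<pi> l"
    using continuous_on_tendsto_compose[OF \<pi> l(3) l(1)] pp(1) by (simp add: o_def)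
  have "ereal (\<Psi> l - \<epsilon> / 2) < ereal (\<Psi> l)" using e by simp
  also have "\<dots> \<le> u (\<pi> l)" by (rule le[OF l(1)])
  also have "\<dots> \<le> liminf (\<lambda>j. uk (\<sigma> j) (\<pi> (pp (s j))))"
    by (rule epi_liminf_subseq[where u = u and uk = uk, OF li \<sigma> ys])
  finally have ev1: "eventually (\<lambda>j. ereal (\<Psi> l - \<epsilon> / 2) < uk (\<sigma> j) (\<pi> (pp (s j)))) sequentially"
    by (rule less_LiminfD)
  have "(\<lambda>j. \<Psi> (pp (s j))) \<longlonglongrightarrow> \<Psi> l"
    using continuous_on_tendsto_compose[OF \<Psi> l(3) l(1)] pp(1) by (simp add: o_def)
  then have ev2: "eventually (\<lambda>j. \<Psi> (pp (s j)) < \<Psi> l + \<epsilon> / 2) sequentially"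
    using e by (intro order_tendstoD(2)) auto
  from ev1 ev2 have "eventually (\<lambda>j. False) sequentially"
  proof eventually_elim
    case (elim j)
    have "uk (\<sigma> j) (\<pi> (pp (s j))) < ereal (\<Psi> (pp (s j)) - \<epsilon>)" using pp(2) by (simp add: \<sigma>_def)
    with elim(1) have "ereal (\<Psi> l - \<epsilon> / 2) < ereal (\<Psi> (pp (s j)) - \<epsilon>)" by (rule less_trans)
    then have "\<Psi> l - \<epsilon> / 2 < \<Psi> (pp (s j)) - \<epsilon>" by simp
    then show False using elim(2) by linarith
  qed
  then show False by simp
qed

lemma convex_efun_radial_growth:
  fixes g :: "'a::real_normed_vector \<Rightarrow> ereal"
  assumes cv: "convex_efun g" and c: "g c = ereal s" and D: "D > 0"
    and sphere: "\<And>p. dist p c = D \<Longrightarrow> ereal (s + K * D) \<le> g p"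
    and z: "D \<le> dist z c"
  shows "ereal (s + K * dist z c) \<le> g z"
proof -
  define t where "t = D / dist z c"
  have "dist z c > 0" using D z by linarith
  then have t: "0 < t" "t \<le> 1" "t * dist z c = D" unfolding t_def using D z by auto
  define p where "p = (1 - t) *\<^sub>R c + t *\<^sub>R z"
  have "p - c = t *\<^sub>R (z - c)" unfolding p_def by (simp add: algebra_simps)
  then have "dist p c = norm (t *\<^sub>R (z - c))" by (simp add: dist_norm)
  also have "\<dots> = D" using t(1,3) by (simp add: dist_norm)
  finally have "dist p c = D" .
  then have "ereal (s + K * D) \<le> g p" by (rule sphere)
  also have "g p \<le> ereal (1 - t) * g c + ereal t * g z"
    using cv t unfolding convex_efun_def p_def by simp
  finally have le: "ereal (s + K * D) \<le> ereal ((1 - t) * s) + ereal t * g z" using c by simp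
  show ?thesis
  proof (cases "g z")
    case (real q)
    then have "t * (K * dist z c) \<le> t * (q - s)" using le t(3) by (simp add: algebra_simps)
    then show ?thesis using real t(1) by (simp add: mult_le_cancel_left_pos)
  qed (use le t(1) in auto)
qed

lemma convex_efun_linear_minorant_from_ball:
  fixes g :: "'a::real_normed_vector \<Rightarrow> ereal"
  assumes cv: "convex_efun g" and K: "K \<ge> 0" and D: "D > 0" "(K + 1) * B + C + a \<le> D"
    and c: "norm c < B" "g c \<le> ereal a"
    and ball: "\<And>z. norm z \<le> B + D \<Longrightarrow> ereal ((K + 1) * norm z - C) \<le> g z"
  shows "ereal (K * norm z - (C + K * B)) \<le> g z"
proof -
  have "B > 0" using c(1) norm_ge_zero[of c] by linarith
  then have "K * B \<ge> 0" using K by simp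
  have "ereal (- C) \<le> ereal ((K + 1) * norm c - C)" using K by simp
  also have "\<dots> \<le> g c" using ball c(1) D(1) by simp
  finally obtain s where s: "g c = ereal s" "- C \<le> s" "s \<le> a"
    using c(2) by (cases "g c") auto
  show ?thesis
  proof (cases "dist z c < D")
    case True
    then have "norm z \<le> B + D" using c(1) norm_triangle_ineq2[of z c] unfolding dist_norm by linarith
    moreover have "K * norm z - (C + K * B) \<le> (K + 1) * norm z - C"
      using \<open>K * B \<ge> 0\<close> by (simp add: algebra_simps)
    ultimately show ?thesis using ball[of z] order.trans ereal_less_eq(3) by blast
  next
    case False
    \<comment> \<open>On the sphere of radius D around c the slope K + 1 beats the value at c;
      convexity propagates slope K outwards.\<close>
    have "ereal (s + K * D) \<le> g p" if p: "dist p c = D" for p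
    proof -
      have "norm p \<le> B + D" "D - B \<le> norm p"
        using p c(1) norm_triangle_ineq2[of p c] norm_triangle_ineq4[of p c] unfolding dist_norm by linarith+
      moreover have "(K + 1) * (D - B) \<le> (K + 1) * norm p"
        using \<open>D - B \<le> norm p\<close> K by (intro mult_left_mono) auto
      moreover have "(K + 1) * (D - B) = K * D + (D - (K + 1) * B)" by (simp add: algebra_simps)
      ultimately have "s + K * D \<le> (K + 1) * norm p - C" using D(2) s(3) by linarith
      then show ?thesis using ball[OF \<open>norm p \<le> B + D\<close>] order.trans ereal_less_eq(3) by blast
    qed
    then have "ereal (s + K * dist z c) \<le> g z"
      using convex_efun_radial_growth[OF cv s(1) D(1)] False by simp
    moreover have "K * (norm z - B) \<le> K * dist z c"
      using c(1) norm_triangle_ineq2[of z c] K unfolding dist_norm by (intro mult_left_mono) auto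
    then have "K * norm z - (C + K * B) \<le> s + K * dist z c" using s(2) by (simp add: algebra_simps)
    ultimately show ?thesis using order.trans ereal_less_eq(3) by blast
  qed
qed

lemma epi_liminf_uniform_linear_minorant:
  fixes uk :: "nat \<Rightarrow> 'a::euclidean_space \<Rightarrow> ereal"
  assumes cv: "\<And>k. convex_efun (uk k)"
    and li: "\<And>x xs. xs \<longlonglongrightarrow> x \<Longrightarrow> u x \<le> liminf (\<lambda>k. uk k (xs k))"
    and zs: "zs \<longlonglongrightarrow> c0" "eventually (\<lambda>k. uk k (zs k) \<le> ereal a) sequentially"
    and C: "\<And>z. ereal ((K + 1) * norm z - C) \<le> u z" and K: "K \<ge> 0"
  shows "\<exists>C'. eventually (\<lambda>k. \<forall>z. ereal (K * norm z - C') \<le> uk k z) sequentially"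
proof -
  define B where "B = norm c0 + 1"
  define D where "D = (K + 1) * B + \<bar>C + 1\<bar> + \<bar>a\<bar> + 1"
  have "(K + 1) * B \<ge> 0" using K unfolding B_def by simp
  then have D: "D > 0" "(K + 1) * B + (C + 1) + a \<le> D" unfolding D_def by auto
  have "eventually (\<lambda>k. \<forall>z\<in>cball 0 (B + D). ereal ((K + 1) * norm z - C - 1) \<le> uk k z) sequentially"
    using epi_liminf_uniform_on_compact[where u = u and uk = uk and P = "cball 0 (B + D)"
        and \<Psi> = "\<lambda>z. (K + 1) * norm z - C" and \<pi> = "\<lambda>z. z" and \<epsilon> = 1, OF li] C
    by (simp add: continuous_intros)
  moreover have "eventually (\<lambda>k. dist (zs k) c0 < 1) sequentially"
    using tendstoD[OF zs(1), of 1] by simp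
  then have "eventually (\<lambda>k. norm (zs k) < B) sequentially"
  proof (rule eventually_mono)
    fix k assume "dist (zs k) c0 < 1"
    then show "norm (zs k) < B" using norm_triangle_ineq2[of "zs k" c0] unfolding B_def dist_norm by linarith
  qed
  ultimately have "eventually (\<lambda>k. \<forall>z. ereal (K * norm z - (C + 1 + K * B)) \<le> uk k z) sequentially"
    using zs(2)
  proof eventually_elim
    case (elim k)
    have "ereal ((K + 1) * norm z - (C + 1)) \<le> uk k z" if "norm z \<le> B + D" for z
      using elim(1) that by (simp add: diff_diff_eq)
    then show ?case
      using convex_efun_linear_minorant_from_ball[where C = "C + 1", OF cv K D elim(2,3)] by blast
  qed
  then show ?thesis by blast
qed

lemma fconj_le_if_minorant_on_ball:
  fixes g :: "'a::euclidean_space \<Rightarrow> ereal"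
  assumes near: "\<And>z. norm z \<le> \<rho> \<Longrightarrow> ereal (inner z w - F - \<epsilon>) \<le> g z"
    and far: "\<And>z. ereal (K * norm z - C) \<le> g z"
    and K: "norm w + 1 \<le> K" and \<rho>: "\<bar>C\<bar> + \<bar>F\<bar> \<le> \<rho>" and e: "\<epsilon> \<ge> 0"
  shows "fconj g w \<le> ereal (F + \<epsilon>)"
proof -
  have "affine_minorant g w (- (F + \<epsilon>))"
    unfolding affine_minorant_def
  proof
    fix z
    show "ereal (inner z w + - (F + \<epsilon>)) \<le> g z"
    proof (cases "norm z \<le> \<rho>")
      case True
      have "ereal (inner z w + - (F + \<epsilon>)) = ereal (inner z w - F - \<epsilon>)"
        by (simp add: algebra_simps)
      also have "\<dots> \<le> g z" by (rule near[OF True])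
      finally show ?thesis .
    next
      case False
      have "inner z w \<le> norm z * norm w" using Cauchy_Schwarz_ineq2[of z w] by simp
      moreover have "norm z * (norm w + 1) \<le> norm z * K" using K by (intro mult_left_mono) auto
      ultimately have "inner z w + - (F + \<epsilon>) \<le> K * norm z - C"
        using False \<rho> e by (simp add: algebra_simps)
      then show ?thesis using far[of z] order.trans ereal_less_eq(3) by blast
    qed
  qed
  from fconj_le_if_affine_minorant[OF this] show ?thesis by (simp add: add.commute)
qed

lemma epi_liminf_fconj_upper:
  fixes uk :: "nat \<Rightarrow> 'a::euclidean_space \<Rightarrow> ereal" and F :: "'a \<Rightarrow> real"
  assumes cv: "\<And>k. convex_efun (uk k)"
    and li: "\<And>x xs. xs \<longlonglongrightarrow> x \<Longrightarrow> u x \<le> liminf (\<lambda>k. uk k (xs k))"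
    and zs: "zs \<longlonglongrightarrow> c0" "eventually (\<lambda>k. uk k (zs k) \<le> ereal a) sequentially"
    and growth: "\<And>K. \<exists>C. \<forall>z. ereal (K * norm z - C) \<le> u z"
    and F: "\<And>w. fconj u w = ereal (F w)" and e: "\<epsilon> > 0"
  shows "eventually (\<lambda>k. \<forall>w\<in>cball 0 R. fconj (uk k) w \<le> ereal (F w + \<epsilon>)) sequentially"
proof -
  have Fc: "continuous_on UNIV F" by (rule fconj_continuous_on[OF F])
  have "bounded (F ` cball 0 R)"
    by (intro compact_imp_bounded compact_continuous_image continuous_on_subset[OF Fc]) auto
  then obtain S where "\<forall>x\<in>F ` cball 0 R. norm x \<le> S" unfolding bounded_iff by blast
  then have S: "\<bar>F w\<bar> \<le> S" if "w \<in> cball 0 R" for w using that by simp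
  define K where "K = \<bar>R\<bar> + 1"
  obtain C where C: "\<And>z. ereal ((K + 1) * norm z - C) \<le> u z" using growth by blast
  have "K \<ge> 0" unfolding K_def by simp
  obtain C' where far: "eventually (\<lambda>k. \<forall>z. ereal (K * norm z - C') \<le> uk k z) sequentially"
    using epi_liminf_uniform_linear_minorant[where u = u and uk = uk, OF cv li zs C \<open>K \<ge> 0\<close>] by blast
  define \<rho> where "\<rho> = \<bar>C'\<bar> + \<bar>S\<bar>"
  have "continuous_on (cball 0 \<rho> \<times> cball 0 R) (\<lambda>p::'a \<times> 'a. inner (fst p) (snd p) - F (snd p))"
    by (intro continuous_intros continuous_on_compose2[OF Fc]) auto
  moreover have "ereal (inner (fst p) (snd p) - F (snd p)) \<le> u (fst p)" for p
    using affine_minorantD[OF fenchel_young[OF F], of "fst p" "snd p"] by simp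
  ultimately have "eventually (\<lambda>k. \<forall>p\<in>cball 0 \<rho> \<times> cball 0 R.
      ereal (inner (fst p) (snd p) - F (snd p) - \<epsilon>) \<le> uk k (fst p)) sequentially"
    using e by (intro epi_liminf_uniform_on_compact[where u = u and uk = uk, OF li])
      (simp_all add: compact_Times continuous_on_fst)
  with far show ?thesis
  proof eventually_elim
    case (elim k)
    show ?case
    proof
      fix w :: 'a assume w: "w \<in> cball 0 R"
      show "fconj (uk k) w \<le> ereal (F w + \<epsilon>)"
      proof (rule fconj_le_if_minorant_on_ball)
        show "ereal (inner z w - F w - \<epsilon>) \<le> uk k z" if "norm z \<le> \<rho>" for z
          using elim(2) that w by simp
        show "ereal (K * norm z - C') \<le> uk k z" for z using elim(1) by simp
        show "norm w + 1 \<le> K" "\<bar>C'\<bar> + \<bar>F w\<bar> \<le> \<rho>" "\<epsilon> \<ge> 0"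
          using w S[OF w] e unfolding K_def \<rho>_def by auto
      qed
    qed
  qed
qed

lemma epi_limsup_fconj_lower_along_subseq:
  fixes uk :: "nat \<Rightarrow> 'a::euclidean_space \<Rightarrow> ereal" and F :: "'a \<Rightarrow> real"
  assumes ls: "\<And>x. \<exists>xs. xs \<longlonglongrightarrow> x \<and> limsup (\<lambda>k. uk k (xs k)) \<le> u x"
    and F: "\<And>w. fconj u w = ereal (F w)" and e: "\<epsilon> > 0"
    and \<sigma>: "strict_mono \<sigma>" and ws: "ws \<longlonglongrightarrow> w0"
  shows "eventually (\<lambda>j. ereal (F (ws j) - \<epsilon>) < fconj (uk (\<sigma> j)) (ws j)) sequentially"
proof -
  have "ereal (F w0 - \<epsilon> / 4) < fconj u w0" using F e by simp
  then obtain z0 where z0: "ereal (F w0 - \<epsilon> / 4) < ereal (inner z0 w0) - u z0"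
    unfolding fconj_def less_SUP_iff by blast
  then obtain b0 where b0: "u z0 = ereal b0"
    using fconj_upper[of z0 w0 u] F[of w0] by (cases "u z0") auto
  have zb: "F w0 - \<epsilon> / 4 < inner z0 w0 - b0" using z0 b0 by simp
  obtain zs where zs: "zs \<longlonglongrightarrow> z0" "limsup (\<lambda>k. uk k (zs k)) \<le> ereal b0" using ls b0 by metis
  have "eventually (\<lambda>k. uk k (zs k) < ereal (b0 + \<epsilon> / 4)) sequentially"
    using zs(2) e by (intro Limsup_lessD) (auto intro: le_less_trans)
  then have ev1: "eventually (\<lambda>j. uk (\<sigma> j) (zs (\<sigma> j)) < ereal (b0 + \<epsilon> / 4)) sequentially"
    by (rule eventually_subseq[OF \<sigma>])
  have "(\<lambda>j. inner (zs (\<sigma> j)) (ws j)) \<longlonglongrightarrow> inner z0 w0"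
    using LIMSEQ_subseq_LIMSEQ[OF zs(1) \<sigma>] ws by (intro tendsto_inner) (auto simp: o_def)
  then have ev2: "eventually (\<lambda>j. inner z0 w0 - \<epsilon> / 4 < inner (zs (\<sigma> j)) (ws j)) sequentially"
    using e by (intro order_tendstoD(1)) auto
  have "(\<lambda>j. F (ws j)) \<longlonglongrightarrow> F w0"
    using continuous_on_tendsto_compose[OF fconj_continuous_on[OF F] ws] by simp
  then have ev3: "eventually (\<lambda>j. F (ws j) < F w0 + \<epsilon> / 4) sequentially"
    using e by (intro order_tendstoD(2)) auto
  from ev1 ev2 ev3 show ?thesis
  proof eventually_elim
    case (elim j)
    have "ereal (F (ws j) - \<epsilon>) < ereal (inner (zs (\<sigma> j)) (ws j) - (b0 + \<epsilon> / 4))"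
      using elim(2,3) zb by simp
    also have "\<dots> \<le> ereal (inner (zs (\<sigma> j)) (ws j)) - uk (\<sigma> j) (zs (\<sigma> j))"
      using elim(1) by (cases "uk (\<sigma> j) (zs (\<sigma> j))") auto
    also have "\<dots> \<le> fconj (uk (\<sigma> j)) (ws j)" by (rule fconj_upper)
    finally show ?case .
  qed
qed

lemma epi_limsup_fconj_lower:
  fixes uk :: "nat \<Rightarrow> 'a::euclidean_space \<Rightarrow> ereal" and F :: "'a \<Rightarrow> real"
  assumes ls: "\<And>x. \<exists>xs. xs \<longlonglongrightarrow> x \<and> limsup (\<lambda>k. uk k (xs k)) \<le> u x"
    and F: "\<And>w. fconj u w = ereal (F w)" and e: "\<epsilon> > 0"
  shows "eventually (\<lambda>k. \<forall>w\<in>cball 0 R. ereal (F w - \<epsilon>) \<le> fconj (uk k) w) sequentially"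
proof (rule ccontr)
  assume "\<not> ?thesis"
  then obtain r :: "nat \<Rightarrow> nat" where r: "strict_mono r"
    "\<forall>n. \<not> (\<forall>w\<in>cball 0 R. ereal (F w - \<epsilon>) \<le> fconj (uk (r n)) w)"
    using not_eventually_sequentiallyD by blast
  then have "\<forall>n. \<exists>w. w \<in> cball 0 R \<and> fconj (uk (r n)) w < ereal (F w - \<epsilon>)" by (meson not_le)
  then obtain ww where ww: "\<And>n. ww n \<in> cball 0 R" "\<And>n. fconj (uk (r n)) (ww n) < ereal (F (ww n) - \<epsilon>)"
    by metis
  obtain w0 s where w0: "strict_mono s" "(ww \<circ> s) \<longlonglongrightarrow> w0"
    using seq_compactE[OF compact_imp_seq_compact[OF compact_cball], of ww] ww(1) by blast
  have "eventually (\<lambda>j. ereal (F ((ww \<circ> s) j) - \<epsilon>) < fconj (uk ((r \<circ> s) j)) ((ww \<circ> s) j)) sequentially"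
    using strict_mono_o[OF r(1) w0(1)] w0(2) by (rule epi_limsup_fconj_lower_along_subseq[OF ls F e])
  then obtain j where "ereal (F (ww (s j)) - \<epsilon>) < fconj (uk (r (s j))) (ww (s j))"
    by (auto dest: eventually_happens)
  with ww(2)[of "s j"] show False by simp
qed

lemma epi_converges_imp_delta:
  fixes uk :: "nat \<Rightarrow> 'a::euclidean_space \<Rightarrow> ereal"
  assumes uk: "\<And>k. uk k \<in> Conv_sc" and u: "u \<in> Conv_sc" and epi: "epi_converges uk u"
  shows "(\<lambda>k. delta (uk k) u) \<longlonglongrightarrow> 0"
proof -
  have li: "\<And>x xs. xs \<longlonglongrightarrow> x \<Longrightarrow> u x \<le> liminf (\<lambda>k. uk k (xs k))"
    and ls: "\<And>x. \<exists>xs. xs \<longlonglongrightarrow> x \<and> limsup (\<lambda>k. uk k (xs k)) \<le> u x"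
    using epi unfolding epi_converges_def by auto
  have cv: "\<And>k. convex_efun (uk k)" using uk unfolding Conv_sc_def Conv_coe_def by auto
  define F where "F w = real_of_ereal (fconj u w)" for w
  have F: "fconj u w = ereal (F w)" for w
  proof -
    obtain Fw where "fconj u w = ereal Fw" by (rule Conv_sc_fconj_finite[OF u])
    then show ?thesis by (simp add: F_def)
  qed
  have "u \<in> Conv_coe" using u unfolding Conv_sc_def by simp
  then obtain c0 a0 where c0: "u c0 = ereal a0" using proper_funD(2)[OF Conv_coeD(2)] by blast
  obtain zs where zs: "zs \<longlonglongrightarrow> c0" "limsup (\<lambda>k. uk k (zs k)) \<le> ereal a0"
    using ls[of c0] unfolding c0 by blast
  have "eventually (\<lambda>k. uk k (zs k) < ereal (a0 + 1)) sequentially"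
    using zs(2) by (intro Limsup_lessD) (auto intro: le_less_trans)
  then have zs_le: "eventually (\<lambda>k. uk k (zs k) \<le> ereal (a0 + 1)) sequentially"
    by (rule eventually_mono) simp
  show ?thesis
  proof (rule order_tendstoI)
    fix y :: ereal assume "y < 0"
    then have "y < delta (uk k) u" for k using delta_nonneg by (rule less_le_trans)
    then show "eventually (\<lambda>k. y < delta (uk k) u) sequentially" by simp
  next
    fix y :: ereal assume "0 < y"
    then obtain \<epsilon> where \<epsilon>: "0 < \<epsilon>" "ereal \<epsilon> < y" using ereal_dense2 by force
    have "eventually (\<lambda>k. \<forall>w\<in>cball 0 (1 / \<epsilon>). fconj (uk k) w \<le> ereal (F w + \<epsilon>)) sequentially"
      using cv li zs(1) zs_le Conv_sc_linear_minorant[OF u] F \<epsilon>(1) by (rule epi_liminf_fconj_upper)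
    moreover have "eventually (\<lambda>k. \<forall>w\<in>cball 0 (1 / \<epsilon>). ereal (F w - \<epsilon>) \<le> fconj (uk k) w) sequentially"
      using ls F \<epsilon>(1) by (rule epi_limsup_fconj_lower)
    ultimately show "eventually (\<lambda>k. delta (uk k) u < y) sequentially"
    proof eventually_elim
      case (elim k)
      have "delta (uk k) u \<le> ereal \<epsilon>"
        using \<epsilon>(1) F elim by (intro delta_le_if_fconj_close) auto
      then show ?case using \<epsilon>(2) by (rule le_less_trans)
    qed
  qed
qed

theorem lemma5p12:
  fixes uk :: "nat \<Rightarrow> 'a::euclidean_space \<Rightarrow> ereal" and u :: "'a \<Rightarrow> ereal"
  shows "((\<forall>k. uk k \<in> Conv_coe) \<and> u \<in> Conv_coe \<and> (\<lambda>k. delta (uk k) u) \<longlonglongrightarrow> 0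
           \<longrightarrow> epi_converges uk u) \<and>
         ((\<forall>k. uk k \<in> Conv_sc) \<and> u \<in> Conv_sc \<and> epi_converges uk u
           \<longrightarrow> (\<lambda>k. delta (uk k) u) \<longlonglongrightarrow> 0)"
  using delta_imp_epi_converges epi_converges_imp_delta by blast

end
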